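(* Let $v = \pi \sqrt{3n/2}$, $v^+ = \pi \sqrt{3(n+1)/2}$, $v^- = \pi \sqrt{3(n-1)/2}$. For all integers $n \geq 2363$, $$\frac{v}{\sqrt{v^+ v^-}}\, \Xi(n) \leq \frac{I_2(v^-)\, I_2(v^+)}{I_2(v)^2} \leq \frac{v}{\sqrt{v^+ v^-}}\, \Psi(n),$$ where $$\Xi(n) = \left(1- \frac{9\pi^4}{16 v^3}- \frac{27 \pi^6}{8 v^5} - \frac{405 \pi^8}{2048 v^7}\right) \left( 1-\frac{309}{v^5}-\frac{535}{v^6}\right),$$ $$\Psi(n) = \left(1-\frac{9\pi^4}{16 v^3}+\frac{81 \pi^8}{256 v^6}\right) \left( 1-\frac{308}{v^5}-\frac{286}{v^6} \right).$$
   Context: $I_2$ denotes the modified Bessel function of the first kind of order 2. *)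

theory Defs
  imports Complex_Main
begin

definition besselI2 :: "real \<Rightarrow> real" where
  "besselI2 x = (\<Sum>k. (x / 2) ^ (2 * k + 2) / (fact k * fact (k + 2)))"

end

theory Submission
  imports Defs "HOL-Analysis.Complex_Transcendental"
begin

text \<open>
  Write \<open>r = I\<^sub>2' / I\<^sub>2\<close>. The Bessel equation \<open>x\<^sup>2 I\<^sub>2'' + x I\<^sub>2' - (x\<^sup>2 + 4) I\<^sub>2 = 0\<close> turns into
  the Riccati equation \<open>r' = 1 + 4 / x\<^sup>2 - r / x - r\<^sup>2\<close>. Comparing \<open>r\<close> with the truncations
  \<open>1 - 1 / (2 x) + 15 / (8 x\<^sup>2) + \<kappa> / x\<^sup>3\<close> of its asymptotic expansion (\<open>\<kappa> = 15 / 8\<close> from below,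
  \<open>\<kappa> = 3\<close> from above) pins \<open>r\<close> down up to \<open>1 / x\<^sup>4\<close> for \<open>x \<ge> 186\<close>. For
  \<open>\<Phi>(s) = ln I\<^sub>2(\<surd>s) - \<surd>s + (ln s) / 4\<close> this gives \<open>-2 / x\<^sup>5 \<le> \<Phi>''(x\<^sup>2) \<le> -(45 / 32) / x\<^sup>5\<close>.

  With \<open>c = 3 \<pi>\<^sup>2 / 2\<close> we have \<open>v\<^sup>+\<^sup>2 = v\<^sup>2 + c\<close> and \<open>v\<^sup>-\<^sup>2 = v\<^sup>2 - c\<close>, and the ratio of the
  theorem equals \<open>v / \<surd>(v\<^sup>+ v\<^sup>-)\<close> times \<open>exp (\<Delta>\<^sup>2\<Phi>) * exp (v\<^sup>+ + v\<^sup>- - 2 v)\<close>, where \<open>\<Delta>\<^sup>2\<Phi>\<close> is the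
  second difference of \<open>\<Phi>\<close> at \<open>v\<^sup>2\<close> with step \<open>c\<close>. The curvature bounds make
  \<open>\<Delta>\<^sup>2\<Phi> \<approx> -(45 / 32) c\<^sup>2 / v\<^sup>5\<close>, while \<open>v\<^sup>+ + v\<^sup>- - 2 v \<approx> -c\<^sup>2 / (4 v\<^sup>3)\<close>; elementary bounds on
  \<open>exp\<close> turn these estimates into \<open>\<Xi>\<close> and \<open>\<Psi>\<close>.
\<close>

section \<open>A family of entire power series\<close>

definition bessel_coeff :: "nat \<Rightarrow> nat \<Rightarrow> real" where
  "bessel_coeff k n = 1 / (fact n * fact (n + k))"

text \<open>\<open>bessel_series k (x\<^sup>2 / 4) = (2 / x) ^ k * I\<^sub>k x\<close> for the modified Bessel function
  \<open>I\<^sub>k\<close> of order \<open>k\<close>.\<close>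
definition bessel_series :: "nat \<Rightarrow> real \<Rightarrow> real" where
  "bessel_series k y = (\<Sum>n. bessel_coeff k n * y ^ n)"

lemma bessel_coeff_pos: "0 < bessel_coeff k n"
  by (simp add: bessel_coeff_def)

lemma bessel_coeff_le_inverse_fact: "bessel_coeff k n \<le> inverse (fact n)"
  unfolding bessel_coeff_def
  by (simp add: divide_simps mult_le_cancel_left1)

lemma summable_bessel_series: "summable (\<lambda>n. bessel_coeff k n * y ^ n)"
proof (rule summable_comparison_test'[OF summable_exp[of "\<bar>y\<bar>"]])
  show "norm (bessel_coeff k n * y ^ n) \<le> inverse (fact n) * \<bar>y\<bar> ^ n" for n
    using bessel_coeff_pos[of k n] bessel_coeff_le_inverse_fact[of k n]
    by (simp add: abs_mult power_abs mult_right_mono)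
qed

lemma diffs_bessel_coeff: "diffs (bessel_coeff k) = bessel_coeff (k + 1)"
proof
  fix n
  have "diffs (bessel_coeff k) n = real (Suc n) / (real (Suc n) * fact n * fact (n + Suc k))"
    by (simp add: diffs_def bessel_coeff_def)
  then show "diffs (bessel_coeff k) n = bessel_coeff (k + 1) n"
    by (simp add: bessel_coeff_def)
qed

lemma has_field_derivative_bessel_series:
  "(bessel_series k has_field_derivative bessel_series (k + 1) y) (at y)"
  using termdiffs_strong_converges_everywhere[OF summable_bessel_series[of k]]
  unfolding bessel_series_def[abs_def] diffs_bessel_coeff .

lemma has_field_derivative_bessel_series_chain [derivative_intros]:
  "(f has_real_derivative f') (at x within S) \<Longrightarrow>
    ((\<lambda>x. bessel_series k (f x)) has_real_derivative bessel_series (k + 1) (f x) * f') (at x within S)"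
  by (rule DERIV_chain2[OF has_field_derivative_bessel_series])

lemma bessel_coeff_recurrence:
  "bessel_coeff k (Suc n) - (real k + 1) * bessel_coeff (k + 1) (Suc n) = bessel_coeff (k + 2) n"
proof -
  define F where "F = (fact n :: real)"
  define G where "G = (fact (n + k + 1) :: real)"
  have FG: "0 < F" "0 < G"
    by (simp_all add: F_def G_def)
  have "fact (Suc n) = (real n + 1) * F" "fact (Suc n + k) = G"
    "fact (Suc n + Suc k) = (real n + real k + 2) * G"
    by (simp_all add: F_def G_def algebra_simps)
  then have "bessel_coeff k (Suc n) - (real k + 1) * bessel_coeff (k + 1) (Suc n)
      = 1 / ((real n + 1) * F * G) - (real k + 1) / ((real n + 1) * F * ((real n + real k + 2) * G))"
    by (simp add: bessel_coeff_def)
  also have "\<dots> = 1 / (F * ((real n + real k + 2) * G))"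
    using FG by (simp add: divide_simps)
  also have "\<dots> = bessel_coeff (k + 2) n"
    by (simp add: bessel_coeff_def F_def G_def algebra_simps)
  finally show ?thesis .
qed

lemma bessel_series_recurrence:
  "y * bessel_series (k + 2) y = bessel_series k y - (real k + 1) * bessel_series (k + 1) y"
proof -
  define b where "b n = bessel_coeff k n * y ^ n - (real k + 1) * (bessel_coeff (k + 1) n * y ^ n)" for n
  have "b sums (bessel_series k y - (real k + 1) * bessel_series (k + 1) y)"
    unfolding b_def bessel_series_def
    by (intro sums_diff sums_mult summable_sums summable_bessel_series)
  moreover have "b 0 = 0"
    by (simp add: b_def bessel_coeff_def add.commute)
  moreover have "b (Suc n) = y * (bessel_coeff (k + 2) n * y ^ n)" for n
  proof -
    have "b (Suc n) = (bessel_coeff k (Suc n) - (real k + 1) * bessel_coeff (k + 1) (Suc n)) * y ^ Suc n"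
      by (simp only: b_def left_diff_distrib mult.assoc)
    then show ?thesis
      unfolding bessel_coeff_recurrence by (simp add: ac_simps)
  qed
  ultimately have "(\<lambda>n. y * (bessel_coeff (k + 2) n * y ^ n)) sums
      (bessel_series k y - (real k + 1) * bessel_series (k + 1) y)"
    using sums_Suc_iff[of b] by simp
  moreover have "(\<lambda>n. y * (bessel_coeff (k + 2) n * y ^ n)) sums (y * bessel_series (k + 2) y)"
    unfolding bessel_series_def by (intro sums_mult summable_sums summable_bessel_series)
  ultimately show ?thesis
    using sums_unique2 by blast
qed

lemma bessel_series_pos: "0 \<le> y \<Longrightarrow> 0 < bessel_series k y"
  unfolding bessel_series_def
  by (rule suminf_pos2[OF summable_bessel_series, where i = 0])
     (simp_all add: bessel_coeff_pos less_imp_le)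

lemma bessel_series_Suc_le: "0 \<le> y \<Longrightarrow> bessel_series (k + 1) y \<le> bessel_series k y"
  unfolding bessel_series_def
proof (rule suminf_le[OF _ summable_bessel_series summable_bessel_series])
  fix n
  assume "0 \<le> y"
  have "fact (n + k) \<le> (fact (n + Suc k) :: real)"
    by (intro fact_mono) simp
  then have "bessel_coeff (k + 1) n \<le> bessel_coeff k n"
    unfolding bessel_coeff_def by (intro divide_left_mono mult_left_mono) auto
  then show "bessel_coeff (k + 1) n * y ^ n \<le> bessel_coeff k n * y ^ n"
    using \<open>0 \<le> y\<close> by (simp add: mult_right_mono)
qed

section \<open>The Bessel equation for \<open>I\<^sub>2\<close>\<close>

definition dbesselI2 :: "real \<Rightarrow> real" where
  "dbesselI2 x = x / 2 * (bessel_series 1 (x\<^sup>2 / 4) - bessel_series 2 (x\<^sup>2 / 4))"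

definition ddbesselI2 :: "real \<Rightarrow> real" where
  "ddbesselI2 x = (x\<^sup>2 / 4 + 3 / 2) * bessel_series 2 (x\<^sup>2 / 4) - bessel_series 1 (x\<^sup>2 / 4) / 2"

lemma besselI2_eq_bessel_series: "besselI2 x = x\<^sup>2 / 4 * bessel_series 2 (x\<^sup>2 / 4)"
proof -
  have "(x / 2) ^ (2 * n + 2) / (fact n * fact (n + 2)) = x\<^sup>2 / 4 * (bessel_coeff 2 n * (x\<^sup>2 / 4) ^ n)"
    for n
  proof -
    have "(x / 2) ^ (2 * n + 2) = x\<^sup>2 / 4 * (x\<^sup>2 / 4) ^ n"
      by (simp add: power_add power_mult power_divide power2_eq_square)
    then show ?thesis
      by (simp add: bessel_coeff_def)
  qed
  then have "besselI2 x = (\<Sum>n. x\<^sup>2 / 4 * (bessel_coeff 2 n * (x\<^sup>2 / 4) ^ n))"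
    by (simp only: besselI2_def)
  also have "\<dots> = x\<^sup>2 / 4 * bessel_series 2 (x\<^sup>2 / 4)"
    unfolding bessel_series_def by (rule suminf_mult[OF summable_bessel_series])
  finally show ?thesis .
qed

lemma bessel_series_3_eq: "y * bessel_series 3 y = bessel_series 1 y - 2 * bessel_series 2 y"
  using bessel_series_recurrence[of y 1] by (simp add: eval_nat_numeral)

lemma has_real_derivative_besselI2: "(besselI2 has_real_derivative dbesselI2 x) (at x)"
proof -
  have "((\<lambda>x. x\<^sup>2 / 4 * bessel_series 2 (x\<^sup>2 / 4)) has_real_derivative
      2 * x / 4 * bessel_series 2 (x\<^sup>2 / 4) + x\<^sup>2 / 4 * (bessel_series 3 (x\<^sup>2 / 4) * (2 * x / 4))) (at x)"
    by (auto intro!: derivative_eq_intros)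
  also have "2 * x / 4 * bessel_series 2 (x\<^sup>2 / 4) + x\<^sup>2 / 4 * (bessel_series 3 (x\<^sup>2 / 4) * (2 * x / 4))
      = x / 2 * (bessel_series 2 (x\<^sup>2 / 4) + x\<^sup>2 / 4 * bessel_series 3 (x\<^sup>2 / 4))"
    by (simp add: algebra_simps)
  also have "\<dots> = dbesselI2 x"
    unfolding bessel_series_3_eq dbesselI2_def by (simp add: algebra_simps)
  finally show ?thesis
    unfolding besselI2_eq_bessel_series[abs_def] .
qed

lemma has_real_derivative_dbesselI2: "(dbesselI2 has_real_derivative ddbesselI2 x) (at x)"
proof -
  have "((\<lambda>x. x / 2 * (bessel_series 1 (x\<^sup>2 / 4) - bessel_series 2 (x\<^sup>2 / 4))) has_real_derivative
      1 / 2 * (bessel_series 1 (x\<^sup>2 / 4) - bessel_series 2 (x\<^sup>2 / 4)) +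
      x / 2 * (bessel_series 2 (x\<^sup>2 / 4) * (2 * x / 4) - bessel_series 3 (x\<^sup>2 / 4) * (2 * x / 4))) (at x)"
    by (auto intro!: derivative_eq_intros simp: numeral_eq_Suc)
  also have "1 / 2 * (bessel_series 1 (x\<^sup>2 / 4) - bessel_series 2 (x\<^sup>2 / 4)) +
      x / 2 * (bessel_series 2 (x\<^sup>2 / 4) * (2 * x / 4) - bessel_series 3 (x\<^sup>2 / 4) * (2 * x / 4))
    = (bessel_series 1 (x\<^sup>2 / 4) - bessel_series 2 (x\<^sup>2 / 4)) / 2
      + x\<^sup>2 / 4 * bessel_series 2 (x\<^sup>2 / 4) - x\<^sup>2 / 4 * bessel_series 3 (x\<^sup>2 / 4)"
    by (simp add: field_simps power2_eq_square)
  also have "\<dots> = ddbesselI2 x"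
    unfolding bessel_series_3_eq ddbesselI2_def by (simp add: field_simps)
  finally show ?thesis
    unfolding dbesselI2_def[abs_def] .
qed

lemma has_real_derivative_besselI2_chain [derivative_intros]:
  "(f has_real_derivative f') (at x within S) \<Longrightarrow>
    ((\<lambda>x. besselI2 (f x)) has_real_derivative dbesselI2 (f x) * f') (at x within S)"
  by (rule DERIV_chain2[OF has_real_derivative_besselI2])

lemma has_real_derivative_dbesselI2_chain [derivative_intros]:
  "(f has_real_derivative f') (at x within S) \<Longrightarrow>
    ((\<lambda>x. dbesselI2 (f x)) has_real_derivative ddbesselI2 (f x) * f') (at x within S)"
  by (rule DERIV_chain2[OF has_real_derivative_dbesselI2])

lemma besselI2_ode: "x\<^sup>2 * ddbesselI2 x + x * dbesselI2 x - (x\<^sup>2 + 4) * besselI2 x = 0"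
  unfolding ddbesselI2_def dbesselI2_def besselI2_eq_bessel_series
  by (simp add: algebra_simps power2_eq_square)

lemma ddbesselI2_eq:
  assumes "x \<noteq> 0" shows "ddbesselI2 x = (1 + 4 / x\<^sup>2) * besselI2 x - dbesselI2 x / x"
proof -
  have "ddbesselI2 x = ((x\<^sup>2 + 4) * besselI2 x - x * dbesselI2 x) / x\<^sup>2"
    using besselI2_ode[of x] assms by (simp add: field_simps)
  also have "\<dots> = (1 + 4 / x\<^sup>2) * besselI2 x - dbesselI2 x / x"
    using assms by (simp add: field_simps power2_eq_square)
  finally show ?thesis .
qed

lemma besselI2_pos: "x \<noteq> 0 \<Longrightarrow> 0 < besselI2 x"
  unfolding besselI2_eq_bessel_series by (simp add: bessel_series_pos)

lemma besselI2_nonneg: "0 \<le> besselI2 x"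
  unfolding besselI2_eq_bessel_series by (simp add: bessel_series_pos less_imp_le)

lemma dbesselI2_nonneg: "0 \<le> x \<Longrightarrow> 0 \<le> dbesselI2 x"
  unfolding dbesselI2_def using bessel_series_Suc_le[of "x\<^sup>2 / 4" 1] by (simp add: numeral_eq_Suc)

lemma besselI2_mono: "0 \<le> a \<Longrightarrow> a \<le> b \<Longrightarrow> besselI2 a \<le> besselI2 b"
  by (rule DERIV_nonneg_imp_nondecreasing)
     (auto intro!: exI[of _ "dbesselI2 _"] has_real_derivative_besselI2 dbesselI2_nonneg)

text \<open>The weight \<open>exp t\<close> is chosen so that the derivative of
  \<open>exp t * (t ^ 3 * I\<^sub>2' t - (t ^ 3 + 2 * t\<^sup>2) * I\<^sub>2 t)\<close> reduces, by the Bessel equation, to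
  \<open>- 5 * t\<^sup>2 * exp t * I\<^sub>2 t \<le> 0\<close>.\<close>
lemma dbesselI2_le: assumes "0 < x" shows "dbesselI2 x \<le> (1 + 2 / x) * besselI2 x"
proof -
  define p where "p t = exp t * (t ^ 3 * dbesselI2 t - (t ^ 3 + 2 * t\<^sup>2) * besselI2 t)" for t
  have "p x \<le> p 0"
  proof (rule DERIV_nonpos_imp_nonincreasing[of 0 x p])
    show "0 \<le> x"
      using assms by simp
    fix t :: real
    have "(p has_real_derivative
        exp t * (t ^ 3 * dbesselI2 t - (t ^ 3 + 2 * t\<^sup>2) * besselI2 t) +
        exp t * (3 * t\<^sup>2 * dbesselI2 t + t ^ 3 * ddbesselI2 t
          - ((3 * t\<^sup>2 + 4 * t) * besselI2 t + (t ^ 3 + 2 * t\<^sup>2) * dbesselI2 t))) (at t)"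
      unfolding p_def[abs_def]
      by (auto intro!: derivative_eq_intros simp: power2_eq_square power3_eq_cube algebra_simps)
    moreover have "exp t * (t ^ 3 * dbesselI2 t - (t ^ 3 + 2 * t\<^sup>2) * besselI2 t) +
        exp t * (3 * t\<^sup>2 * dbesselI2 t + t ^ 3 * ddbesselI2 t
          - ((3 * t\<^sup>2 + 4 * t) * besselI2 t + (t ^ 3 + 2 * t\<^sup>2) * dbesselI2 t))
      = - 5 * t\<^sup>2 * exp t * besselI2 t
        + t * exp t * (t\<^sup>2 * ddbesselI2 t + t * dbesselI2 t - (t\<^sup>2 + 4) * besselI2 t)"
      by (simp add: algebra_simps power2_eq_square power3_eq_cube)
    moreover have "- 5 * t\<^sup>2 * exp t * besselI2 t \<le> 0"
      using besselI2_nonneg[of t] by simp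
    ultimately show "\<exists>y. (p has_real_derivative y) (at t) \<and> y \<le> 0"
      unfolding besselI2_ode by auto
  qed
  then have "x ^ 3 * dbesselI2 x \<le> (x ^ 3 + 2 * x\<^sup>2) * besselI2 x"
    by (simp add: p_def mult_le_0_iff)
  also have "\<dots> = x ^ 3 * ((1 + 2 / x) * besselI2 x)"
    using assms by (simp add: field_simps power2_eq_square power3_eq_cube)
  finally have "x ^ 3 * dbesselI2 x \<le> x ^ 3 * ((1 + 2 / x) * besselI2 x)" .
  then show ?thesis
    using assms by simp
qed

section \<open>Riccati comparison for \<open>I\<^sub>2' / I\<^sub>2\<close>\<close>

definition besselI2_logderiv :: "real \<Rightarrow> real" where
  "besselI2_logderiv x = dbesselI2 x / besselI2 x"

text \<open>The asymptotic expansion of \<open>I\<^sub>2' / I\<^sub>2\<close> truncated after a free coefficient \<open>\<kappa>\<close> of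
  \<open>x\<^sup>-\<^sup>3\<close>: \<open>\<kappa> = 15 / 8\<close> yields a lower and \<open>\<kappa> = 3\<close> an upper barrier.\<close>
definition logderiv_approx :: "real \<Rightarrow> real \<Rightarrow> real" where
  "logderiv_approx \<kappa> x = 1 - 1 / (2 * x) + 15 / (8 * x\<^sup>2) + \<kappa> / x ^ 3"

definition approx_weight :: "real \<Rightarrow> real \<Rightarrow> real" where
  "approx_weight \<kappa> x = sqrt x * exp (x - 15 / (8 * x) - \<kappa> / (2 * x\<^sup>2))"

definition riccati_residual :: "real \<Rightarrow> real \<Rightarrow> real" where
  "riccati_residual \<kappa> t =
     (2 * \<kappa> - 15 / 4) / t ^ 3 + (225 / 64 - 3 * \<kappa>) / t ^ 4 + 15 * \<kappa> / (4 * t ^ 5) + \<kappa>\<^sup>2 / t ^ 6"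

definition riccati_gap :: "real \<Rightarrow> real \<Rightarrow> real" where
  "riccati_gap \<kappa> x = approx_weight \<kappa> x * (logderiv_approx \<kappa> x * besselI2 x - dbesselI2 x)"

lemma has_real_derivative_logderiv_approx:
  assumes "0 < t"
  shows "(logderiv_approx \<kappa> has_real_derivative 1 / (2 * t\<^sup>2) - 15 / (4 * t ^ 3) - 3 * \<kappa> / t ^ 4) (at t)"
  unfolding logderiv_approx_def[abs_def] using assms
  by (auto intro!: derivative_eq_intros simp: field_simps eval_nat_numeral)

lemma has_real_derivative_approx_weight:
  assumes "0 < t"
  shows "(approx_weight \<kappa> has_real_derivative approx_weight \<kappa> t * (1 / t + logderiv_approx \<kappa> t)) (at t)"
  unfolding approx_weight_def[abs_def]
  apply (rule DERIV_cong)
   apply (auto intro!: derivative_eq_intros)[1]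
  using assms by (simp_all add: logderiv_approx_def field_simps real_sqrt_divide eval_nat_numeral)

lemma riccati_residual_eq:
  assumes "0 < t"
  shows "1 / (2 * t\<^sup>2) - 15 / (4 * t ^ 3) - 3 * \<kappa> / t ^ 4 + logderiv_approx \<kappa> t / t
      + (logderiv_approx \<kappa> t)\<^sup>2 - 1 - 4 / t\<^sup>2 = riccati_residual \<kappa> t"
  using assms unfolding logderiv_approx_def riccati_residual_def
  by (simp add: field_simps eval_nat_numeral)

text \<open>Since \<open>(approx_weight \<kappa> * besselI2)' = approx_weight \<kappa> * besselI2 * (1 / t + L + I\<^sub>2' / I\<^sub>2)\<close>
  for \<open>L = logderiv_approx \<kappa>\<close>, the Bessel equation leaves only the residual of \<open>L\<close> in the
  Riccati equation \<open>r' = 1 + 4 / t\<^sup>2 - r / t - r\<^sup>2\<close> satisfied by \<open>r = I\<^sub>2' / I\<^sub>2\<close>.\<close>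
lemma has_real_derivative_riccati_gap:
  assumes "0 < t"
  shows "(riccati_gap \<kappa> has_real_derivative
           approx_weight \<kappa> t * besselI2 t * riccati_residual \<kappa> t) (at t)"
proof -
  let ?W = "approx_weight \<kappa> t" and ?L = "logderiv_approx \<kappa> t"
  let ?L' = "1 / (2 * t\<^sup>2) - 15 / (4 * t ^ 3) - 3 * \<kappa> / t ^ 4"
  have "(riccati_gap \<kappa> has_real_derivative
      ?W * (1 / t + ?L) * (?L * besselI2 t - dbesselI2 t)
      + (?L' * besselI2 t + dbesselI2 t * ?L - ddbesselI2 t) * ?W) (at t)"
    unfolding riccati_gap_def[abs_def]
    by (intro DERIV_mult DERIV_diff has_real_derivative_approx_weight
        has_real_derivative_logderiv_approx has_real_derivative_besselI2
        has_real_derivative_dbesselI2 assms)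
  also have "?W * (1 / t + ?L) * (?L * besselI2 t - dbesselI2 t)
      + (?L' * besselI2 t + dbesselI2 t * ?L - ddbesselI2 t) * ?W
      = ?W * besselI2 t * (?L' + ?L / t + ?L\<^sup>2 - 1 - 4 / t\<^sup>2)"
    using assms by (simp add: ddbesselI2_eq field_simps power2_eq_square)
  finally show ?thesis
    unfolding riccati_residual_eq[OF assms] .
qed

lemma riccati_gap_antimono:
  assumes "10 \<le> a" "a \<le> b"
  shows "riccati_gap (15 / 8) b \<le> riccati_gap (15 / 8) a"
proof (rule DERIV_nonpos_imp_nonincreasing[OF assms(2)])
  fix t
  assume "a \<le> t" "t \<le> b"
  then have t: "10 \<le> t"
    using assms by simp
  have "riccati_residual (15 / 8) t = (225 + 450 * t - 135 * t\<^sup>2) / (64 * t ^ 6)"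
    using t by (simp add: riccati_residual_def field_simps eval_nat_numeral)
  also have "\<dots> \<le> 0"
  proof -
    have "10 * t \<le> t * t"
      using t by (intro mult_right_mono) auto
    then have "450 * t + 225 \<le> 135 * t\<^sup>2"
      unfolding power2_eq_square using t by linarith
    then show ?thesis
      using t by (intro divide_nonpos_pos) auto
  qed
  finally have "approx_weight (15 / 8) t * besselI2 t * riccati_residual (15 / 8) t \<le> 0"
    using t by (intro mult_nonneg_nonpos mult_nonneg_nonneg)
      (simp_all add: approx_weight_def besselI2_nonneg)
  then show "\<exists>y. (riccati_gap (15 / 8) has_real_derivative y) (at t) \<and> y \<le> 0"
    using has_real_derivative_riccati_gap[of t] t by auto
qed

lemma riccati_gap_mono:
  assumes "10 \<le> a" "a \<le> b"
  shows "riccati_gap 3 a \<le> riccati_gap 3 b"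
proof (rule DERIV_nonneg_imp_nondecreasing[OF assms(2)])
  fix t
  assume "a \<le> t" "t \<le> b"
  then have t: "10 \<le> t"
    using assms by simp
  have "riccati_residual 3 t = (144 * t ^ 3 - 351 * t\<^sup>2 + 720 * t + 576) / (64 * t ^ 6)"
    using t by (simp add: riccati_residual_def field_simps eval_nat_numeral)
  also have "0 \<le> \<dots>"
  proof -
    have "10 * t\<^sup>2 \<le> t * t\<^sup>2"
      using t by (intro mult_right_mono) auto
    moreover have "0 \<le> t\<^sup>2"
      by simp
    ultimately have "351 * t\<^sup>2 \<le> 144 * t ^ 3"
      unfolding power3_eq_cube power2_eq_square by linarith
    then show ?thesis
      using t by simp
  qed
  finally have "0 \<le> approx_weight 3 t * besselI2 t * riccati_residual 3 t"
    using t by (intro mult_nonneg_nonneg) (simp_all add: approx_weight_def besselI2_nonneg)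
  then show "\<exists>y. (riccati_gap 3 has_real_derivative y) (at t) \<and> 0 \<le> y"
    using has_real_derivative_riccati_gap[of t] t by auto
qed

lemma eight_mult_power4_le_exp:
  assumes "186 \<le> (x::real)" shows "8 * x ^ 4 \<le> exp (x - 11)"
proof -
  have "8 * 13 ^ 12 * x ^ 4 \<le> x ^ 8 * x ^ 4"
  proof (rule mult_right_mono)
    have "(186::real) ^ 8 \<le> x ^ 8"
      using assms by (intro power_mono) auto
    then show "8 * 13 ^ 12 \<le> x ^ 8"
      by simp
  qed simp
  then have "8 * x ^ 4 \<le> (x / 13) ^ 12"
    by (simp add: field_simps flip: power_add)
  also have "\<dots> \<le> (1 + (x - 11) / real 12) ^ 12"
    using assms by (intro power_mono) (simp_all add: field_simps)
  also have "\<dots> \<le> exp (x - 11)"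
    using assms by (intro exp_ge_one_plus_x_over_n_power_n) auto
  finally show ?thesis .
qed

lemma approx_weight_growth:
  assumes "186 \<le> x" "0 \<le> \<kappa>" "\<kappa> \<le> 3"
  shows "approx_weight \<kappa> 10 * 2 * x ^ 4 \<le> approx_weight \<kappa> x"
proof -
  have "approx_weight \<kappa> 10 \<le> 4 * exp 10"
  proof -
    have "sqrt 10 \<le> (4::real)"
      by (rule real_le_lsqrt) auto
    then show ?thesis
      unfolding approx_weight_def using assms by (intro mult_mono) auto
  qed
  then have "approx_weight \<kappa> 10 * 2 * x ^ 4 \<le> 4 * exp 10 * 2 * x ^ 4"
    by (intro mult_right_mono) auto
  also have "\<dots> = 8 * x ^ 4 * exp 10"
    by simp
  also have "\<dots> \<le> exp (x - 11) * exp 10"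
    using eight_mult_power4_le_exp[OF assms(1)] by simp
  also have "\<dots> = exp (x - 1)"
    by (simp flip: exp_add)
  also have "\<dots> \<le> approx_weight \<kappa> x"
  proof -
    have "15 / (8 * x) \<le> 1 / 2" "\<kappa> / (2 * x\<^sup>2) \<le> 1 / 2"
      using assms mult_mono[OF assms(1) assms(1)] by (simp_all add: field_simps power2_eq_square)
    then have "exp (x - 1) \<le> exp (x - 15 / (8 * x) - \<kappa> / (2 * x\<^sup>2))"
      by simp
    also have "\<dots> \<le> approx_weight \<kappa> x"
      unfolding approx_weight_def using assms by (intro mult_le_cancel_right1[THEN iffD2]) auto
    finally show ?thesis .
  qed
  finally show ?thesis .
qed

lemma abs_riccati_gap_10:
  assumes "0 \<le> \<kappa>" "\<kappa> \<le> 3"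
  shows "\<bar>riccati_gap \<kappa> 10\<bar> \<le> approx_weight \<kappa> 10 * (2 * besselI2 10)"
proof -
  have L: "0 \<le> logderiv_approx \<kappa> 10" "logderiv_approx \<kappa> 10 \<le> 2"
    using assms by (simp_all add: logderiv_approx_def)
  have D: "0 \<le> dbesselI2 10" "dbesselI2 10 \<le> 2 * besselI2 10"
    using dbesselI2_nonneg[of 10] dbesselI2_le[of 10] besselI2_nonneg[of 10] by simp_all
  have "logderiv_approx \<kappa> 10 * besselI2 10 \<le> 2 * besselI2 10"
    using L besselI2_nonneg[of 10] by (intro mult_right_mono) auto
  moreover have "0 \<le> logderiv_approx \<kappa> 10 * besselI2 10"
    using L besselI2_nonneg[of 10] by simp
  ultimately have "\<bar>logderiv_approx \<kappa> 10 * besselI2 10 - dbesselI2 10\<bar> \<le> 2 * besselI2 10"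
    using D by linarith
  moreover have W: "0 \<le> approx_weight \<kappa> 10"
    by (simp add: approx_weight_def)
  ultimately show ?thesis
    unfolding riccati_gap_def abs_mult abs_of_nonneg[OF W] by (rule mult_left_mono)
qed

lemma abs_riccati_gap_10_le:
  assumes "186 \<le> x" "0 \<le> \<kappa>" "\<kappa> \<le> 3"
  shows "\<bar>riccati_gap \<kappa> 10\<bar> \<le> approx_weight \<kappa> x * besselI2 x / x ^ 4"
proof -
  have "\<bar>riccati_gap \<kappa> 10\<bar> \<le> approx_weight \<kappa> 10 * (2 * besselI2 10)"
    by (rule abs_riccati_gap_10[OF assms(2,3)])
  also have "\<dots> \<le> approx_weight \<kappa> 10 * (2 * besselI2 x)"
    using besselI2_mono[of 10 x] assms by (intro mult_left_mono) (simp_all add: approx_weight_def)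
  also have "\<dots> = approx_weight \<kappa> 10 * 2 * x ^ 4 * besselI2 x / x ^ 4"
    using assms by simp
  also have "\<dots> \<le> approx_weight \<kappa> x * besselI2 x / x ^ 4"
    using approx_weight_growth[OF assms] besselI2_nonneg[of x]
    by (intro divide_right_mono mult_right_mono) auto
  finally show ?thesis .
qed

lemma besselI2_logderiv_lower:
  assumes "186 \<le> x"
  shows "logderiv_approx (15 / 8) x - 1 / x ^ 4 \<le> besselI2_logderiv x"
proof -
  let ?L = "logderiv_approx (15 / 8) x"
  have W: "0 < approx_weight (15 / 8) x" and I: "0 < besselI2 x"
    using assms besselI2_pos[of x] by (simp_all add: approx_weight_def)
  have "approx_weight (15 / 8) x * (?L * besselI2 x - dbesselI2 x)
      \<le> approx_weight (15 / 8) x * (besselI2 x / x ^ 4)"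
    using riccati_gap_antimono[of 10 x] abs_riccati_gap_10_le[of x "15 / 8"] assms
    by (simp add: riccati_gap_def)
  then have "?L * besselI2 x - dbesselI2 x \<le> besselI2 x / x ^ 4"
    using W by (rule mult_left_le_imp_le)
  then have "(?L * besselI2 x - dbesselI2 x) / besselI2 x \<le> (besselI2 x / x ^ 4) / besselI2 x"
    using I by (rule divide_right_mono[OF _ less_imp_le])
  then show ?thesis
    using I by (simp add: besselI2_logderiv_def diff_divide_distrib)
qed

lemma besselI2_logderiv_upper:
  assumes "186 \<le> x"
  shows "besselI2_logderiv x \<le> logderiv_approx 3 x + 1 / x ^ 4"
proof -
  let ?L = "logderiv_approx 3 x"
  have W: "0 < approx_weight 3 x" and I: "0 < besselI2 x"
    using assms besselI2_pos[of x] by (simp_all add: approx_weight_def)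
  have "approx_weight 3 x * (dbesselI2 x - ?L * besselI2 x)
      \<le> approx_weight 3 x * (besselI2 x / x ^ 4)"
    using riccati_gap_mono[of 10 x] abs_riccati_gap_10_le[of x 3] assms
    by (simp add: riccati_gap_def algebra_simps)
  then have "dbesselI2 x - ?L * besselI2 x \<le> besselI2 x / x ^ 4"
    using W by (rule mult_left_le_imp_le)
  then have "(dbesselI2 x - ?L * besselI2 x) / besselI2 x \<le> (besselI2 x / x ^ 4) / besselI2 x"
    using I by (rule divide_right_mono[OF _ less_imp_le])
  then show ?thesis
    using I by (simp add: besselI2_logderiv_def diff_divide_distrib)
qed

section \<open>Curvature of the scaled logarithm of \<open>I\<^sub>2\<close>\<close>

lemma has_real_derivative_besselI2_logderiv:
  assumes "x \<noteq> 0"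
  shows "(besselI2_logderiv has_real_derivative
           1 + 4 / x\<^sup>2 - besselI2_logderiv x / x - (besselI2_logderiv x)\<^sup>2) (at x)"
proof -
  have I: "besselI2 x \<noteq> 0"
    using besselI2_pos[OF assms] by simp
  have "(besselI2_logderiv has_real_derivative
      (ddbesselI2 x * besselI2 x - dbesselI2 x * dbesselI2 x) / (besselI2 x * besselI2 x)) (at x)"
    unfolding besselI2_logderiv_def[abs_def]
    by (rule DERIV_divide[OF has_real_derivative_dbesselI2 has_real_derivative_besselI2 I])
  also have "(ddbesselI2 x * besselI2 x - dbesselI2 x * dbesselI2 x) / (besselI2 x * besselI2 x)
      = 1 + 4 / x\<^sup>2 - besselI2_logderiv x / x - (besselI2_logderiv x)\<^sup>2"
    using assms I by (simp add: ddbesselI2_eq besselI2_logderiv_def field_simps power2_eq_square)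
  finally show ?thesis .
qed

lemma has_real_derivative_besselI2_logderiv_chain [derivative_intros]:
  "(f has_real_derivative f') (at x within S) \<Longrightarrow> f x \<noteq> 0 \<Longrightarrow>
    ((\<lambda>x. besselI2_logderiv (f x)) has_real_derivative
      (1 + 4 / (f x)\<^sup>2 - besselI2_logderiv (f x) / f x - (besselI2_logderiv (f x))\<^sup>2) * f') (at x within S)"
  by (rule DERIV_chain2[OF has_real_derivative_besselI2_logderiv])

definition log_besselI2_scaled :: "real \<Rightarrow> real" where
  "log_besselI2_scaled s = ln (besselI2 (sqrt s)) - sqrt s + ln s / 4"

definition curvature_numerator :: "real \<Rightarrow> real \<Rightarrow> real" where
  "curvature_numerator x r = x + 1 + 3 / x - 2 * r - x * r\<^sup>2"

lemma curvature_numerator_eq: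
  assumes "0 < x"
  shows "(1 + 4 / x\<^sup>2 - r / x - r\<^sup>2 - (r - 1) * inverse x) / (4 * x\<^sup>2) - 1 / (4 * (x\<^sup>2 * x\<^sup>2))
    = curvature_numerator x r / (4 * x ^ 3)"
  using assms unfolding curvature_numerator_def
  by (simp add: field_simps power2_eq_square power3_eq_cube)

lemma has_real_derivative_log_besselI2_scaled:
  assumes "0 < s"
  shows "(log_besselI2_scaled has_real_derivative
           (besselI2_logderiv (sqrt s) - 1) / (2 * sqrt s) + 1 / (4 * s)) (at s)"
  unfolding log_besselI2_scaled_def[abs_def]
  apply (rule DERIV_cong)
   apply (auto intro!: derivative_eq_intros)[1]
  using assms besselI2_pos[of "sqrt s"] by (simp_all add: besselI2_logderiv_def field_simps)

lemma has_real_derivative_log_besselI2_scaled_deriv: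
  assumes "0 < s"
  shows "((\<lambda>s. (besselI2_logderiv (sqrt s) - 1) / (2 * sqrt s) + 1 / (4 * s)) has_real_derivative
           curvature_numerator (sqrt s) (besselI2_logderiv (sqrt s)) / (4 * sqrt s ^ 3)) (at s)"
  apply (rule DERIV_cong)
   apply (auto intro!: derivative_eq_intros)[1]
  using assms curvature_numerator_eq[of "sqrt s" "besselI2_logderiv (sqrt s)"] by simp_all

lemma curvature_numerator_antimono:
  assumes "0 < x" "a \<le> r" "0 \<le> a + r"
  shows "curvature_numerator x r \<le> curvature_numerator x a"
proof -
  have "0 \<le> (r - a) * (2 + x * (a + r))"
    using assms by (intro mult_nonneg_nonneg) auto
  moreover have "curvature_numerator x a - curvature_numerator x r = (r - a) * (2 + x * (a + r))"
    unfolding curvature_numerator_def by (simp add: algebra_simps power2_eq_square)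
  ultimately show ?thesis
    by linarith
qed

lemma mult_power_le_next_power:
  fixes a x :: real
  assumes "a \<le> x" "0 \<le> a"
  shows "a * x \<le> x\<^sup>2" "a * x\<^sup>2 \<le> x ^ 3" "a * x ^ 3 \<le> x ^ 4" "a * x ^ 4 \<le> x ^ 5"
proof -
  have "a * x ^ n \<le> x ^ (n + 1)" for n
    using assms by (simp add: mult_right_mono)
  from this[of 1] this[of 2] this[of 3] this[of 4]
  show "a * x \<le> x\<^sup>2" "a * x\<^sup>2 \<le> x ^ 3" "a * x ^ 3 \<le> x ^ 4" "a * x ^ 4 \<le> x ^ 5"
    by (simp_all add: power2_eq_square)
qed

lemma logderiv_approx_minus_nonneg:
  assumes "186 \<le> x" shows "0 \<le> logderiv_approx (15 / 8) x - 1 / x ^ 4"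
proof -
  have "0 \<le> 8 * x ^ 4 - 4 * x ^ 3 + 15 * x\<^sup>2 + 15 * x - 8"
    using assms mult_power_le_next_power[OF assms] by linarith
  moreover have "logderiv_approx (15 / 8) x - 1 / x ^ 4 = (8 * x ^ 4 - 4 * x ^ 3 + 15 * x\<^sup>2 + 15 * x - 8) / (8 * x ^ 4)"
    using assms unfolding logderiv_approx_def by (simp add: field_simps eval_nat_numeral)
  ultimately show ?thesis
    using assms by simp
qed

lemma curvature_numerator_approx_le:
  assumes "186 \<le> x"
  shows "curvature_numerator x (logderiv_approx (15 / 8) x - 1 / x ^ 4) \<le> - (45 / 8) / x\<^sup>2"
proof -
  have x: "0 < x"
    using assms by simp
  have "curvature_numerator x (logderiv_approx (15 / 8) x - 1 / x ^ 4)
      = (- 360 * x ^ 5 - 217 * x ^ 4 - 386 * x ^ 3 + 15 * x\<^sup>2 + 240 * x - 64) / (64 * x ^ 7)"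
    using x unfolding curvature_numerator_def logderiv_approx_def
    by (simp add: field_simps eval_nat_numeral)
  also have "\<dots> \<le> (- 360 * x ^ 5) / (64 * x ^ 7)"
  proof (rule divide_right_mono)
    show "- 360 * x ^ 5 - 217 * x ^ 4 - 386 * x ^ 3 + 15 * x\<^sup>2 + 240 * x - 64 \<le> - 360 * x ^ 5"
      using assms mult_power_le_next_power[OF assms] by linarith
  qed (use x in simp)
  also have "\<dots> = - (45 / 8) / x\<^sup>2"
    using x by (simp add: field_simps eval_nat_numeral)
  finally show ?thesis .
qed

lemma curvature_numerator_approx_ge:
  assumes "186 \<le> x"
  shows "- 8 / x\<^sup>2 \<le> curvature_numerator x (logderiv_approx 3 x + 1 / x ^ 4)"
proof -
  have x: "0 < x"
    using assms by simp
  have "- 8 / x\<^sup>2 = (- 512 * x ^ 5) / (64 * x ^ 7)"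
    using x by (simp add: field_simps eval_nat_numeral)
  also have "\<dots> \<le> (- 504 * x ^ 5 - 545 * x ^ 4 - 784 * x ^ 3 - 816 * x\<^sup>2 - 384 * x - 64) / (64 * x ^ 7)"
  proof (rule divide_right_mono)
    show "- 512 * x ^ 5 \<le> - 504 * x ^ 5 - 545 * x ^ 4 - 784 * x ^ 3 - 816 * x\<^sup>2 - 384 * x - 64"
      using assms mult_power_le_next_power[OF assms] by linarith
  qed (use x in simp)
  also have "\<dots> = curvature_numerator x (logderiv_approx 3 x + 1 / x ^ 4)"
    using x unfolding curvature_numerator_def logderiv_approx_def
    by (simp add: field_simps eval_nat_numeral)
  finally show ?thesis .
qed

lemma besselI2_logderiv_nonneg: "0 \<le> x \<Longrightarrow> 0 \<le> besselI2_logderiv x"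
  unfolding besselI2_logderiv_def by (simp add: dbesselI2_nonneg besselI2_nonneg)

lemma besselI2_curvature_le:
  assumes "186 \<le> x"
  shows "curvature_numerator x (besselI2_logderiv x) / (4 * x ^ 3) \<le> - (45 / 32) / x ^ 5"
proof -
  have x: "0 < x"
    using assms by simp
  have "curvature_numerator x (besselI2_logderiv x)
      \<le> curvature_numerator x (logderiv_approx (15 / 8) x - 1 / x ^ 4)"
    using besselI2_logderiv_lower[OF assms] besselI2_logderiv_nonneg[of x] x
      logderiv_approx_minus_nonneg[OF assms]
    by (intro curvature_numerator_antimono) auto
  also have "\<dots> \<le> - (45 / 8) / x\<^sup>2"
    by (rule curvature_numerator_approx_le[OF assms])
  finally have "curvature_numerator x (besselI2_logderiv x) / (4 * x ^ 3) \<le> (- (45 / 8) / x\<^sup>2) / (4 * x ^ 3)"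
    using x by (intro divide_right_mono) auto
  also have "\<dots> = - (45 / 32) / x ^ 5"
    using x by (simp add: field_simps eval_nat_numeral)
  finally show ?thesis .
qed

lemma besselI2_curvature_ge:
  assumes "186 \<le> x"
  shows "- 2 / x ^ 5 \<le> curvature_numerator x (besselI2_logderiv x) / (4 * x ^ 3)"
proof -
  have x: "0 < x"
    using assms by simp
  have "- 2 / x ^ 5 = (- 8 / x\<^sup>2) / (4 * x ^ 3)"
    using x by (simp add: field_simps eval_nat_numeral)
  also have "\<dots> \<le> curvature_numerator x (logderiv_approx 3 x + 1 / x ^ 4) / (4 * x ^ 3)"
    using curvature_numerator_approx_ge[OF assms] x by (intro divide_right_mono) auto
  also have "\<dots> \<le> curvature_numerator x (besselI2_logderiv x) / (4 * x ^ 3)"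
    using besselI2_logderiv_upper[OF assms] besselI2_logderiv_nonneg[of x] x
    by (intro divide_right_mono curvature_numerator_antimono) auto
  finally show ?thesis .
qed

lemma exp_le_quadratic:
  assumes "y \<le> (0::real)" shows "exp y \<le> 1 + y + y\<^sup>2 / 2"
proof -
  define g where "g z = 1 + z + z\<^sup>2 / 2 - exp z" for z :: real
  have "g 0 \<le> g y"
  proof (rule DERIV_nonpos_imp_nonincreasing[of y 0 g])
    fix t :: real
    have "(g has_real_derivative 1 + t - exp t) (at t)"
      unfolding g_def[abs_def] by (auto intro!: derivative_eq_intros)
    moreover have "1 + t - exp t \<le> 0"
      using exp_ge_add_one_self[of t] by linarith
    ultimately show "\<exists>z. (g has_real_derivative z) (at t) \<and> z \<le> 0"
      by blast
  qed (rule assms)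
  then show ?thesis
    by (simp add: g_def)
qed

lemma sqrt_one_plus_le: "0 \<le> e \<Longrightarrow> sqrt (1 + e) \<le> 1 + e / 2"
  by (rule real_le_lsqrt) (simp_all add: power2_eq_square algebra_simps)

lemma sqrt_one_minus_ge: "0 \<le> e \<Longrightarrow> e \<le> 1 \<Longrightarrow> 1 - e \<le> sqrt (1 - e)"
  by (rule real_le_rsqrt) (simp add: power2_eq_square algebra_simps mult_left_le)

lemma sqrt_one_plus_add_sqrt_one_minus_le:
  fixes e :: real
  assumes "0 \<le> e" "e \<le> 1"
  shows "sqrt (1 + e) + sqrt (1 - e) \<le> 2 - e\<^sup>2 / 4"
proof -
  have e2: "e\<^sup>2 \<le> 1"
    using assms by (simp add: power_le_one)
  have "sqrt (1 + e) * sqrt (1 - e) = sqrt (1 - e\<^sup>2)"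
    by (simp add: real_sqrt_mult[symmetric] algebra_simps power2_eq_square)
  also have "\<dots> \<le> 1 - e\<^sup>2 / 2"
  proof (rule real_le_lsqrt)
    have "(1 - e\<^sup>2 / 2)\<^sup>2 = 1 - e\<^sup>2 + e ^ 4 / 4"
      by (simp add: power2_eq_square eval_nat_numeral algebra_simps)
    then show "1 - e\<^sup>2 \<le> (1 - e\<^sup>2 / 2)\<^sup>2"
      by simp
  qed (use e2 in simp)
  finally have prod: "sqrt (1 + e) * sqrt (1 - e) \<le> 1 - e\<^sup>2 / 2" .
  have "(sqrt (1 + e) + sqrt (1 - e))\<^sup>2 = 2 + 2 * (sqrt (1 + e) * sqrt (1 - e))"
    using assms by (simp add: power2_eq_square algebra_simps)
  also have "\<dots> \<le> 4 - e\<^sup>2 + e ^ 4 / 16"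
  proof -
    have "0 \<le> e ^ 4"
      by simp
    then show ?thesis
      using prod by linarith
  qed
  also have "\<dots> = (2 - e\<^sup>2 / 4)\<^sup>2"
    by (simp add: power2_eq_square eval_nat_numeral algebra_simps)
  finally show ?thesis
    by (rule power2_le_imp_le) (use e2 in simp)
qed

lemma sqrt_one_plus_add_sqrt_one_minus_ge:
  fixes e :: real
  assumes "0 \<le> e" "e \<le> 1 / 2"
  shows "2 - e\<^sup>2 / 4 - e ^ 4 / 2 \<le> sqrt (1 + e) + sqrt (1 - e)"
proof -
  define a where "a = e\<^sup>2"
  have a: "0 \<le> a" "a \<le> 1 / 4"
    unfolding a_def using assms power_mono[of e "1 / 2" 2] by (auto simp: power2_eq_square)
  have a3: "a ^ 3 \<le> a\<^sup>2 / 4"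
    using mult_right_mono[OF a(2), of "a\<^sup>2"] by (simp add: power2_eq_square power3_eq_cube)
  have a4: "a ^ 4 \<le> a\<^sup>2 / 16"
    using mult_right_mono[OF mult_mono[OF a(2) a(2) _ a(1)], of "a\<^sup>2"]
    by (simp add: power2_eq_square eval_nat_numeral)
  have sq: "0 \<le> a\<^sup>2" "0 \<le> a ^ 3" "0 \<le> a ^ 4"
    using a by simp_all
  have "1 - a / 2 - a\<^sup>2 / 2 \<le> sqrt (1 - a)"
  proof (rule real_le_rsqrt)
    have "(1 - a / 2 - a\<^sup>2 / 2)\<^sup>2 = 1 - a - 3 / 4 * a\<^sup>2 + a ^ 3 / 2 + a ^ 4 / 4"
      by (simp add: power2_eq_square eval_nat_numeral algebra_simps)
    then show "(1 - a / 2 - a\<^sup>2 / 2)\<^sup>2 \<le> 1 - a"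
      using a3 a4 sq by linarith
  qed
  also have "sqrt (1 - a) = sqrt (1 + e) * sqrt (1 - e)"
    by (simp add: a_def real_sqrt_mult[symmetric] algebra_simps power2_eq_square)
  finally have prod: "1 - a / 2 - a\<^sup>2 / 2 \<le> sqrt (1 + e) * sqrt (1 - e)" .
  have "(2 - a / 4 - a\<^sup>2 / 2)\<^sup>2 = 4 - a - 2 * a\<^sup>2 + a\<^sup>2 / 16 + a ^ 3 / 4 + a ^ 4 / 4"
    by (simp add: power2_eq_square eval_nat_numeral algebra_simps)
  also have "\<dots> \<le> 2 + 2 * (sqrt (1 + e) * sqrt (1 - e))"
    using prod a3 a4 sq by linarith
  also have "\<dots> = (sqrt (1 + e) + sqrt (1 - e))\<^sup>2"
    using assms by (simp add: power2_eq_square algebra_simps)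
  finally have "2 - a / 4 - a\<^sup>2 / 2 \<le> sqrt (1 + e) + sqrt (1 - e)"
    by (rule power2_le_imp_le) (use assms in simp)
  moreover have "a\<^sup>2 = e ^ 4"
    by (simp add: a_def flip: power_mult)
  ultimately show ?thesis
    by (simp add: a_def)
qed

lemma sqrt_sq_add_eq: "0 < v \<Longrightarrow> sqrt (v\<^sup>2 + c) = v * sqrt (1 + c / v\<^sup>2)"
proof -
  assume v: "0 < v"
  then have "v\<^sup>2 + c = v\<^sup>2 * (1 + c / v\<^sup>2)"
    by (simp add: field_simps)
  then show ?thesis
    using v by (simp add: real_sqrt_mult)
qed

lemma sqrt_second_difference_bounds:
  fixes v c :: real
  assumes v: "0 < v" and c: "0 \<le> c" "2 * c \<le> v\<^sup>2"
  shows "sqrt (v\<^sup>2 + c) + sqrt (v\<^sup>2 - c) - 2 * v \<le> - (c\<^sup>2 / (4 * v ^ 3))"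
    and "- (c\<^sup>2 / (4 * v ^ 3)) - c ^ 4 / (2 * v ^ 7) \<le> sqrt (v\<^sup>2 + c) + sqrt (v\<^sup>2 - c) - 2 * v"
proof -
  define e where "e = c / v\<^sup>2"
  have e: "0 \<le> e" "e \<le> 1 / 2"
    using v c by (simp_all add: e_def field_simps)
  have "sqrt (v\<^sup>2 + c) = v * sqrt (1 + e)" "sqrt (v\<^sup>2 - c) = v * sqrt (1 - e)"
    using sqrt_sq_add_eq[OF v, of c] sqrt_sq_add_eq[OF v, of "- c"] by (simp_all add: e_def)
  then have diff: "sqrt (v\<^sup>2 + c) + sqrt (v\<^sup>2 - c) - 2 * v = v * (sqrt (1 + e) + sqrt (1 - e) - 2)"
    by (simp add: algebra_simps)
  have e2: "v * e\<^sup>2 = c\<^sup>2 / v ^ 3" and e4: "v * e ^ 4 = c ^ 4 / v ^ 7"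
    using v by (simp_all add: e_def field_simps eval_nat_numeral)
  have "v * (sqrt (1 + e) + sqrt (1 - e) - 2) \<le> v * (- e\<^sup>2 / 4)"
    using sqrt_one_plus_add_sqrt_one_minus_le[of e] e v by (intro mult_left_mono) auto
  then show "sqrt (v\<^sup>2 + c) + sqrt (v\<^sup>2 - c) - 2 * v \<le> - (c\<^sup>2 / (4 * v ^ 3))"
    unfolding diff using e2 by simp
  have "v * (- e\<^sup>2 / 4 - e ^ 4 / 2) \<le> v * (sqrt (1 + e) + sqrt (1 - e) - 2)"
    using sqrt_one_plus_add_sqrt_one_minus_ge[OF e] v by (intro mult_left_mono) auto
  then show "- (c\<^sup>2 / (4 * v ^ 3)) - c ^ 4 / (2 * v ^ 7) \<le> sqrt (v\<^sup>2 + c) + sqrt (v\<^sup>2 - c) - 2 * v"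
    unfolding diff using e2 e4 by (simp add: algebra_simps)
qed

lemma one_plus_half_pow5_le: "0 \<le> e \<Longrightarrow> e \<le> 2 / 5 \<Longrightarrow> (1 + e / 2) ^ 5 * (1 - 5 * e / 2) \<le> (1::real)"
proof -
  assume e: "0 \<le> e" "e \<le> 2 / 5"
  have "(1 + e / 2) ^ 5 * (1 - 5 * e / 2)
      = 1 - (240 * e\<^sup>2 + 320 * e ^ 3 + 180 * e ^ 4 + 48 * e ^ 5 + 5 * e ^ 6) / 64"
    by (simp add: field_simps eval_nat_numeral)
  also have "\<dots> \<le> 1"
    using e by simp
  finally show ?thesis .
qed

lemma small_power_bounds:
  fixes t :: real
  assumes "0 < t" "t \<le> 1 / 186"
  shows "t ^ 6 \<le> t ^ 5 / 186" "t ^ 7 \<le> t ^ 6 / 186" "t ^ 10 \<le> t ^ 6 / 186"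
    and "t ^ 5 \<le> 1 / 34596"
proof -
  have t: "0 \<le> t" "t \<le> 1"
    using assms by simp_all
  have step: "t ^ Suc n \<le> t ^ n / 186" for n
    using mult_left_mono[OF assms(2), of "t ^ n"] t by (simp add: ac_simps)
  show "t ^ 6 \<le> t ^ 5 / 186" "t ^ 7 \<le> t ^ 6 / 186"
    using step[of 5] step[of 6] by (simp_all add: numeral_eq_Suc)
  have "t ^ 10 \<le> t ^ 7"
    by (rule power_decreasing) (use t in simp_all)
  also have "\<dots> \<le> t ^ 6 / 186"
    using step[of 6] by (simp add: numeral_eq_Suc)
  finally show "t ^ 10 \<le> t ^ 6 / 186" .
  have "t ^ 5 \<le> t\<^sup>2"
    by (rule power_decreasing) (use t in simp_all)
  also have "\<dots> \<le> (1 / 186)\<^sup>2"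
    using assms by (intro power_mono) simp_all
  finally show "t ^ 5 \<le> 1 / 34596"
    by (simp add: power_one_over)
qed

lemma quadratic_taylor_bound:
  fixes t \<beta> \<gamma> :: real
  assumes t: "0 < t" "t \<le> 1 / 186"
    and \<beta>: "308 \<le> \<beta>" "\<beta> \<le> 309" and \<gamma>: "0 \<le> \<gamma>" "\<gamma> \<le> 11500"
  shows "\<gamma> * t ^ 7 - \<beta> * t ^ 5 \<le> 0"
    and "1 + (\<gamma> * t ^ 7 - \<beta> * t ^ 5) + (\<gamma> * t ^ 7 - \<beta> * t ^ 5)\<^sup>2 / 2
      \<le> 1 - 308 * t ^ 5 + 11500 * t ^ 7 + 47741 * t ^ 10"
proof -
  have t5: "0 \<le> t ^ 5" "0 \<le> t ^ 6" "0 \<le> t ^ 7" "0 \<le> t ^ 10"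
    using t by simp_all
  have bt: "308 * t ^ 5 \<le> \<beta> * t ^ 5" "\<beta> * t ^ 5 \<le> 309 * t ^ 5"
    "0 \<le> \<gamma> * t ^ 7" "\<gamma> * t ^ 7 \<le> 11500 * t ^ 7"
    using \<beta> \<gamma> t5 by (simp_all add: mult_right_mono)
  then show b: "\<gamma> * t ^ 7 - \<beta> * t ^ 5 \<le> 0"
    using small_power_bounds[OF t] t5 by linarith
  then have "\<bar>\<gamma> * t ^ 7 - \<beta> * t ^ 5\<bar> \<le> 309 * t ^ 5"
    using bt by linarith
  then have "(\<gamma> * t ^ 7 - \<beta> * t ^ 5)\<^sup>2 \<le> 95481 * t ^ 10"
    using power_mono[of "\<bar>\<gamma> * t ^ 7 - \<beta> * t ^ 5\<bar>" "309 * t ^ 5" 2]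
    by (simp add: power_mult_distrib flip: power_mult)
  then show "1 + (\<gamma> * t ^ 7 - \<beta> * t ^ 5) + (\<gamma> * t ^ 7 - \<beta> * t ^ 5)\<^sup>2 / 2
      \<le> 1 - 308 * t ^ 5 + 11500 * t ^ 7 + 47741 * t ^ 10"
    using bt t5 by linarith
qed

text \<open>The surplus \<open>a\<^sup>2 / 2 \<ge> 1458 * t ^ 6\<close> of the right-hand side absorbs the terms of order
  \<open>t ^ 6\<close> and beyond.\<close>
lemma quadratic_product_le:
  fixes t a w :: real
  assumes t: "0 < t" "t \<le> 1 / 186" and a: "54 * t ^ 3 \<le> a" "a \<le> 1 / 2"
    and w: "w \<le> 1 - 308 * t ^ 5 + 11500 * t ^ 7 + 47741 * t ^ 10"
  shows "(1 - a + a\<^sup>2 / 2) * w \<le> (1 - a + a\<^sup>2) * (1 - 308 * t ^ 5 - 286 * t ^ 6)"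
proof -
  note tp = small_power_bounds[OF t]
  define X where "X = 1 - a + a\<^sup>2 / 2"
  define Q where "Q = 1 - 308 * t ^ 5 - 286 * t ^ 6"
  have t5: "0 \<le> t ^ 3" "0 \<le> t ^ 5" "0 \<le> t ^ 6" "0 \<le> t ^ 7" "0 \<le> t ^ 10"
    using t by simp_all
  then have a0: "0 \<le> a"
    using a by linarith
  then have "a\<^sup>2 \<le> a"
    using a by (simp add: power2_eq_square mult_right_le_one_le)
  then have X: "0 \<le> X" "X \<le> 1"
    using a a0 unfolding X_def by auto
  have Q: "1 / 2 \<le> Q"
    unfolding Q_def using tp t5 by linarith
  have Qw: "- 286 * t ^ 6 - 11500 * t ^ 7 - 47741 * t ^ 10 \<le> Q - w"
    unfolding Q_def using w by linarith
  have a2: "2916 * t ^ 6 \<le> a\<^sup>2"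
    using power_mono[OF a(1), of 2] t by (simp add: power_mult_distrib flip: power_mult)
  have "0 \<le> X * (Q - w) + a\<^sup>2 / 2 * Q"
  proof (cases "0 \<le> Q - w")
    case True
    then show ?thesis
      using X Q by simp
  next
    case False
    then have "Q - w \<le> X * (Q - w)"
      using X by (simp add: mult_le_cancel_right1)
    moreover have "2916 * t ^ 6 / 2 * (1 / 2) \<le> a\<^sup>2 / 2 * Q"
      using a2 Q t5 by (intro mult_mono) auto
    ultimately show ?thesis
      using Qw tp t5 by linarith
  qed
  moreover have "(1 - a + a\<^sup>2) * Q - X * w = X * (Q - w) + a\<^sup>2 / 2 * Q"
    unfolding X_def by (simp add: field_simps)
  ultimately show ?thesis
    unfolding X_def Q_def by linarith
qed

lemma linear_product_ge:
  fixes t a k C\<^sub>3 C\<^sub>4 :: real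
  assumes t: "0 < t" "t \<le> 1 / 186"
    and a: "0 \<le> a" "a \<le> 1 / 2"
    and k: "0 \<le> k" "k \<le> 25000"
    and C: "3000 \<le> C\<^sub>3" "0 \<le> C\<^sub>4"
  shows "(1 - a - C\<^sub>3 * t ^ 5 - 5 / 128 * C\<^sub>4 * t ^ 7) * (1 - 309 * t ^ 5 - 535 * t ^ 6)
    \<le> (1 - a - k * t ^ 7) * (1 - 490 * t ^ 5)"
proof -
  note tp = small_power_bounds[OF t]
  define P where "P = 1 - a - k * t ^ 7"
  define F where "F = 1 - a - C\<^sub>3 * t ^ 5 - 5 / 128 * C\<^sub>4 * t ^ 7"
  define Q where "Q = 1 - 309 * t ^ 5 - 535 * t ^ 6"
  have t5: "0 \<le> t ^ 5" "0 \<le> t ^ 6" "0 \<le> t ^ 7"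
    using t by simp_all
  have kt: "0 \<le> k * t ^ 7" "k * t ^ 7 \<le> 25000 * t ^ 7"
    and Ct: "3000 * t ^ 5 \<le> C\<^sub>3 * t ^ 5" "0 \<le> C\<^sub>4 * t ^ 7"
    using k C t5 by (simp_all add: mult_right_mono)
  have P: "0 \<le> P" "P \<le> 1" and Q: "0 \<le> Q" "Q \<le> 1" and F: "F \<le> P - 490 * t ^ 5"
    unfolding P_def Q_def F_def using a kt Ct tp t5 by linarith+
  have "0 \<le> 490 * t ^ 5 * (1 - P)"
    using P t5 by simp
  then have P_le: "P - 490 * t ^ 5 \<le> P * (1 - 490 * t ^ 5)"
    by (simp add: algebra_simps)
  have "F * Q \<le> P * (1 - 490 * t ^ 5)"
  proof (cases "0 \<le> F")
    case True
    then have "F * Q \<le> F"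
      using Q by (simp add: mult_left_le)
    then show ?thesis
      using F P_le by linarith
  next
    case False
    then have "F * Q \<le> 0"
      using Q by (simp add: mult_nonpos_nonneg)
    moreover have "0 \<le> P * (1 - 490 * t ^ 5)"
      using P tp by simp
    ultimately show ?thesis
      by linarith
  qed
  then show ?thesis
    unfolding F_def Q_def P_def .
qed

lemma exp_mult_exp_le:
  fixes t a \<beta> \<gamma> P d :: real
  assumes t: "0 < t" "t \<le> 1 / 186"
    and a: "54 * t ^ 3 \<le> a" "a \<le> 1 / 2"
    and \<beta>: "308 \<le> \<beta>" "\<beta> \<le> 309" and \<gamma>: "0 \<le> \<gamma>" "\<gamma> \<le> 11500"
    and P: "P \<le> \<gamma> * t ^ 7 - \<beta> * t ^ 5" and d: "d \<le> - a"
  shows "exp P * exp d \<le> (1 - a + a\<^sup>2) * (1 - 308 * t ^ 5 - 286 * t ^ 6)"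
proof -
  define B where "B = \<gamma> * t ^ 7 - \<beta> * t ^ 5"
  note B = quadratic_taylor_bound[OF t \<beta> \<gamma>, folded B_def]
  have "0 \<le> t ^ 3"
    using t by simp
  then have a0: "0 \<le> a"
    using a by linarith
  have "exp d * exp P \<le> (1 - a + a\<^sup>2 / 2) * (1 + B + B\<^sup>2 / 2)"
  proof (rule mult_mono)
    have "exp d \<le> exp (- a)"
      using d by simp
    also have "\<dots> \<le> 1 + (- a) + (- a)\<^sup>2 / 2"
      using a0 by (intro exp_le_quadratic) simp
    finally show "exp d \<le> 1 - a + a\<^sup>2 / 2"
      by simp
    have "exp P \<le> exp B"
      using P by (simp add: B_def)
    also have "\<dots> \<le> 1 + B + B\<^sup>2 / 2"
      by (rule exp_le_quadratic[OF B(1)])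
    finally show "exp P \<le> 1 + B + B\<^sup>2 / 2" .
    have "0 \<le> ((1 - a)\<^sup>2 + 1) / 2"
      by simp
    then show "0 \<le> 1 - a + a\<^sup>2 / 2"
      by (simp add: power2_eq_square field_simps)
  qed simp
  also have "\<dots> \<le> (1 - a + a\<^sup>2) * (1 - 308 * t ^ 5 - 286 * t ^ 6)"
    by (rule quadratic_product_le[OF t a B(2)])
  finally show ?thesis
    by (simp add: mult.commute)
qed

lemma exp_mult_exp_ge:
  fixes t a k C\<^sub>3 C\<^sub>4 P d :: real
  assumes t: "0 < t" "t \<le> 1 / 186"
    and a: "0 \<le> a" "a \<le> 1 / 2"
    and k: "0 \<le> k" "k \<le> 25000"
    and C: "3000 \<le> C\<^sub>3" "0 \<le> C\<^sub>4"
    and P: "- 490 * t ^ 5 \<le> P" and d: "- a - k * t ^ 7 \<le> d"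
  shows "(1 - a - C\<^sub>3 * t ^ 5 - 5 / 128 * C\<^sub>4 * t ^ 7) * (1 - 309 * t ^ 5 - 535 * t ^ 6)
    \<le> exp P * exp d"
proof -
  have "(1 - a - C\<^sub>3 * t ^ 5 - 5 / 128 * C\<^sub>4 * t ^ 7) * (1 - 309 * t ^ 5 - 535 * t ^ 6)
      \<le> (1 - a - k * t ^ 7) * (1 - 490 * t ^ 5)"
    by (rule linear_product_ge[OF t a k C])
  also have "\<dots> \<le> exp d * exp P"
  proof (rule mult_mono)
    show "1 - a - k * t ^ 7 \<le> exp d"
      using d exp_ge_add_one_self[of d] by linarith
    show "1 - 490 * t ^ 5 \<le> exp P"
      using P exp_ge_add_one_self[of P] by linarith
    show "0 \<le> 1 - 490 * t ^ 5"
      using small_power_bounds[OF t] by linarith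
  qed simp
  finally show ?thesis
    by (simp add: mult.commute)
qed

section \<open>Second differences\<close>

lemma symmetric_difference_le:
  fixes f f' :: "real \<Rightarrow> real"
  assumes "0 \<le> h"
    and f': "\<And>t. a - h \<le> t \<Longrightarrow> t \<le> a + h \<Longrightarrow> (f has_real_derivative f' t) (at t)"
    and bound: "\<And>t. a - h \<le> t \<Longrightarrow> t \<le> a + h \<Longrightarrow> f' t \<le> M"
  shows "f (a + h) - f (a - h) \<le> 2 * M * h"
proof -
  define g where "g u = f (a + u) - f (a - u) - 2 * M * u" for u
  have "g h \<le> g 0"
  proof (rule DERIV_nonpos_imp_nonincreasing[of 0 h g])
    fix u
    assume "0 \<le> u" "u \<le> h"
    then have u: "a - h \<le> a + u" "a + u \<le> a + h" "a - h \<le> a - u" "a - u \<le> a + h"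
      by auto
    have "(g has_real_derivative f' (a + u) * 1 - f' (a - u) * (- 1) - 2 * M * 1) (at u)"
      unfolding g_def[abs_def]
      by (intro DERIV_diff DERIV_cmult DERIV_ident DERIV_chain2[OF f'] derivative_eq_intros refl)
        (use u in auto)
    moreover have "f' (a + u) + f' (a - u) - 2 * M \<le> 0"
      using bound[OF u(1,2)] bound[OF u(3,4)] by simp
    ultimately show "\<exists>y. (g has_real_derivative y) (at u) \<and> y \<le> 0"
      by auto
  qed (rule assms(1))
  then show ?thesis
    by (simp add: g_def)
qed

lemma second_difference_le:
  fixes f f' f'' :: "real \<Rightarrow> real"
  assumes "0 < h"
    and f': "\<And>t. a - h \<le> t \<Longrightarrow> t \<le> a + h \<Longrightarrow> (f has_real_derivative f' t) (at t)"
    and f'': "\<And>t. a - h \<le> t \<Longrightarrow> t \<le> a + h \<Longrightarrow> (f' has_real_derivative f'' t) (at t)"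
    and bound: "\<And>t. a - h \<le> t \<Longrightarrow> t \<le> a + h \<Longrightarrow> f'' t \<le> M"
  shows "f (a + h) + f (a - h) - 2 * f a \<le> M * h\<^sup>2"
proof -
  define G where "G u = f (a + u) + f (a - u) - 2 * f a - M * u\<^sup>2" for u
  have "G h \<le> G 0"
  proof (rule DERIV_nonpos_imp_nonincreasing[of 0 h G])
    fix u
    assume "0 \<le> u" "u \<le> h"
    then have u: "a - h \<le> a + u" "a + u \<le> a + h" "a - h \<le> a - u" "a - u \<le> a + h"
      by auto
    have "(G has_real_derivative f' (a + u) * 1 + f' (a - u) * (- 1) - 0 - M * (2 * u)) (at u)"
      unfolding G_def[abs_def]
      by (intro DERIV_diff DERIV_add DERIV_cmult DERIV_chain2[OF f'] derivative_eq_intros refl)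
        (use u in auto)
    moreover have "f' (a + u) - f' (a - u) \<le> 2 * M * u"
      using \<open>0 \<le> u\<close> \<open>u \<le> h\<close> by (intro symmetric_difference_le[of u a f' f'' M] f'' bound) auto
    ultimately show "\<exists>y. (G has_real_derivative y) (at u) \<and> y \<le> 0"
      by (auto simp: algebra_simps)
  qed (use \<open>0 < h\<close> in simp)
  then show ?thesis
    by (simp add: G_def)
qed

lemma second_difference_ge:
  fixes f f' f'' :: "real \<Rightarrow> real"
  assumes "0 < h"
    and "\<And>t. a - h \<le> t \<Longrightarrow> t \<le> a + h \<Longrightarrow> (f has_real_derivative f' t) (at t)"
    and "\<And>t. a - h \<le> t \<Longrightarrow> t \<le> a + h \<Longrightarrow> (f' has_real_derivative f'' t) (at t)"
    and "\<And>t. a - h \<le> t \<Longrightarrow> t \<le> a + h \<Longrightarrow> m \<le> f'' t"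
  shows "m * h\<^sup>2 \<le> f (a + h) + f (a - h) - 2 * f a"
proof -
  have "(\<lambda>t. - f t) (a + h) + (\<lambda>t. - f t) (a - h) - 2 * (\<lambda>t. - f t) a \<le> (- m) * h\<^sup>2"
    by (rule second_difference_le[OF assms(1)]) (use assms in \<open>auto intro: DERIV_minus\<close>)
  then show ?thesis
    by simp
qed

lemma log_besselI2_scaled_second_difference:
  assumes c: "0 < c" and vm: "186 \<le> vm" "vm\<^sup>2 = v\<^sup>2 - c" and vp: "0 \<le> vp" "vp\<^sup>2 = v\<^sup>2 + c"
  shows "- 2 / vm ^ 5 * c\<^sup>2 \<le> log_besselI2_scaled (v\<^sup>2 + c) + log_besselI2_scaled (v\<^sup>2 - c)
           - 2 * log_besselI2_scaled (v\<^sup>2)"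
    and "log_besselI2_scaled (v\<^sup>2 + c) + log_besselI2_scaled (v\<^sup>2 - c) - 2 * log_besselI2_scaled (v\<^sup>2)
           \<le> - (45 / 32) / vp ^ 5 * c\<^sup>2"
proof -
  let ?\<Phi>' = "\<lambda>s. (besselI2_logderiv (sqrt s) - 1) / (2 * sqrt s) + 1 / (4 * s)"
  let ?\<Phi>'' = "\<lambda>s. curvature_numerator (sqrt s) (besselI2_logderiv (sqrt s)) / (4 * sqrt s ^ 3)"
  have sqrt_t: "186 \<le> vm" "vm \<le> sqrt t" "sqrt t \<le> vp" "0 < t" if "v\<^sup>2 - c \<le> t" "t \<le> v\<^sup>2 + c" for t
  proof -
    show "186 \<le> vm" "vm \<le> sqrt t" "sqrt t \<le> vp"
      using that vm vp by (auto intro: real_le_rsqrt real_le_lsqrt)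
    then have "0 < sqrt t"
      by linarith
    then show "0 < t"
      by simp
  qed
  have \<Phi>': "(log_besselI2_scaled has_real_derivative ?\<Phi>' t) (at t)"
    and \<Phi>'': "(?\<Phi>' has_real_derivative ?\<Phi>'' t) (at t)" if "v\<^sup>2 - c \<le> t" "t \<le> v\<^sup>2 + c" for t
    using sqrt_t[OF that] by (simp_all add: has_real_derivative_log_besselI2_scaled
        has_real_derivative_log_besselI2_scaled_deriv)
  have lower: "- 2 / vm ^ 5 \<le> ?\<Phi>'' t" if "v\<^sup>2 - c \<le> t" "t \<le> v\<^sup>2 + c" for t
  proof -
    have "2 / sqrt t ^ 5 \<le> 2 / vm ^ 5"
      using sqrt_t[OF that] by (intro frac_le power_mono) auto
    moreover have "- 2 / sqrt t ^ 5 \<le> ?\<Phi>'' t"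
      using sqrt_t[OF that] by (intro besselI2_curvature_ge) simp
    ultimately show ?thesis
      by simp
  qed
  show "- 2 / vm ^ 5 * c\<^sup>2 \<le> log_besselI2_scaled (v\<^sup>2 + c) + log_besselI2_scaled (v\<^sup>2 - c)
      - 2 * log_besselI2_scaled (v\<^sup>2)"
    by (rule second_difference_ge[OF c \<Phi>' \<Phi>'' lower])
  have upper: "?\<Phi>'' t \<le> - (45 / 32) / vp ^ 5" if "v\<^sup>2 - c \<le> t" "t \<le> v\<^sup>2 + c" for t
  proof -
    have "(45 / 32) / vp ^ 5 \<le> (45 / 32) / sqrt t ^ 5"
      using sqrt_t[OF that] by (intro frac_le power_mono) auto
    moreover have "?\<Phi>'' t \<le> - (45 / 32) / sqrt t ^ 5"
      using sqrt_t[OF that] by (intro besselI2_curvature_le) simp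
    ultimately show ?thesis
      by simp
  qed
  show "log_besselI2_scaled (v\<^sup>2 + c) + log_besselI2_scaled (v\<^sup>2 - c) - 2 * log_besselI2_scaled (v\<^sup>2)
      \<le> - (45 / 32) / vp ^ 5 * c\<^sup>2"
    by (rule second_difference_le[OF c \<Phi>' \<Phi>'' upper])
qed

lemma log_besselI2_scaled_second_difference_le:
  fixes v c :: real
  assumes v: "0 < v" and vm: "186 \<le> sqrt (v\<^sup>2 - c)" and c: "0 < c" "5 * c \<le> 2 * v\<^sup>2"
  shows "log_besselI2_scaled (v\<^sup>2 + c) + log_besselI2_scaled (v\<^sup>2 - c) - 2 * log_besselI2_scaled (v\<^sup>2)
           \<le> - (45 / 32) * c\<^sup>2 / v ^ 5 + (225 / 64) * c ^ 3 / v ^ 7"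
proof -
  define e where "e = c / v\<^sup>2"
  have e: "0 \<le> e" "e \<le> 2 / 5"
    using v c by (simp_all add: e_def field_simps)
  have vp: "sqrt (v\<^sup>2 + c) = v * sqrt (1 + e)"
    using sqrt_sq_add_eq[OF v] by (simp add: e_def)
  have "log_besselI2_scaled (v\<^sup>2 + c) + log_besselI2_scaled (v\<^sup>2 - c) - 2 * log_besselI2_scaled (v\<^sup>2)
      \<le> - (45 / 32) / sqrt (v\<^sup>2 + c) ^ 5 * c\<^sup>2"
    using vm c by (intro log_besselI2_scaled_second_difference(2)) auto
  also have "\<dots> = - (45 / 32) * c\<^sup>2 * (1 / sqrt (v\<^sup>2 + c) ^ 5)"
    by simp
  also have "\<dots> \<le> - (45 / 32) * c\<^sup>2 * ((1 - 5 * e / 2) / v ^ 5)"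
  proof (rule mult_left_mono_neg)
    define P where "P = sqrt (v\<^sup>2 + c) ^ 5"
    have P: "0 < P"
      using v c by (simp add: P_def)
    have "P * (1 - 5 * e / 2) \<le> (v * (1 + e / 2)) ^ 5 * (1 - 5 * e / 2)"
      unfolding P_def vp using v e sqrt_one_plus_le[of e] by (intro mult_right_mono power_mono) auto
    also have "\<dots> \<le> v ^ 5"
      using one_plus_half_pow5_le[OF e] v by (simp add: power_mult_distrib mult.assoc)
    finally have "(P * (1 - 5 * e / 2)) / (v ^ 5 * P) \<le> v ^ 5 / (v ^ 5 * P)"
      using v P by (intro divide_right_mono) auto
    then show "(1 - 5 * e / 2) / v ^ 5 \<le> 1 / sqrt (v\<^sup>2 + c) ^ 5"
      using v P by (simp add: P_def)
  qed simp
  also have "\<dots> = - (45 / 32) * c\<^sup>2 / v ^ 5 + (225 / 64) * c ^ 3 / v ^ 7"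
    using v by (simp add: e_def field_simps eval_nat_numeral)
  finally show ?thesis .
qed

lemma log_besselI2_scaled_second_difference_ge:
  fixes v c :: real
  assumes v: "0 < v" and vm: "186 \<le> sqrt (v\<^sup>2 - c)" and c: "0 < c" "c \<le> 14.81" "500 * c \<le> v\<^sup>2"
  shows "- 490 / v ^ 5 \<le> log_besselI2_scaled (v\<^sup>2 + c) + log_besselI2_scaled (v\<^sup>2 - c)
           - 2 * log_besselI2_scaled (v\<^sup>2)"
proof -
  define e where "e = c / v\<^sup>2"
  have e: "0 \<le> e" "e \<le> 1 / 500"
    using v c by (simp_all add: e_def field_simps)
  have "sqrt (v\<^sup>2 - c) = v * sqrt (1 - e)"
    using sqrt_sq_add_eq[OF v, of "- c"] by (simp add: e_def)
  have "99 / 100 * v ^ 5 \<le> (1 - e) ^ 5 * v ^ 5"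
    using Bernoulli_inequality[of "- e" 5] e v by (intro mult_right_mono) simp_all
  also have "\<dots> = (v * (1 - e)) ^ 5"
    by (simp add: power_mult_distrib)
  also have "\<dots> \<le> sqrt (v\<^sup>2 - c) ^ 5"
    unfolding \<open>sqrt (v\<^sup>2 - c) = v * sqrt (1 - e)\<close>
    using v e sqrt_one_minus_ge[of e] by (intro power_mono) auto
  finally have vm5: "99 / 100 * v ^ 5 \<le> sqrt (v\<^sup>2 - c) ^ 5" .
  have "2 / sqrt (v\<^sup>2 - c) ^ 5 * c\<^sup>2 \<le> 2 / (99 / 100 * v ^ 5) * 14.81\<^sup>2"
  proof (rule mult_mono)
    show "2 / sqrt (v\<^sup>2 - c) ^ 5 \<le> 2 / (99 / 100 * v ^ 5)"
      using vm5 v by (intro frac_le) simp_all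
    show "c\<^sup>2 \<le> 14.81\<^sup>2"
      using c by (intro power_mono) simp_all
  qed (use v in simp_all)
  also have "\<dots> = (200 / 99 * 14.81\<^sup>2) / v ^ 5"
    by simp
  also have "\<dots> \<le> 490 / v ^ 5"
    using v by (intro divide_right_mono) (simp_all add: power2_eq_square)
  finally have "- 490 / v ^ 5 \<le> - 2 / sqrt (v\<^sup>2 - c) ^ 5 * c\<^sup>2"
    by simp
  also have "\<dots> \<le> log_besselI2_scaled (v\<^sup>2 + c) + log_besselI2_scaled (v\<^sup>2 - c) - 2 * log_besselI2_scaled (v\<^sup>2)"
    using vm c by (intro log_besselI2_scaled_second_difference(1)[where vp = "sqrt (v\<^sup>2 + c)"]) auto
  finally show ?thesis .
qed

section \<open>The ratio of Bessel functions\<close>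

lemma besselI2_eq_exp:
  assumes "0 < x" shows "besselI2 x = exp (log_besselI2_scaled (x\<^sup>2) + x) / sqrt x"
proof -
  have "exp (log_besselI2_scaled (x\<^sup>2) + x) = besselI2 x * exp (ln x / 2)"
    using assms besselI2_pos[of x] by (simp add: log_besselI2_scaled_def ln_realpow exp_add)
  also have "exp (ln x / 2) = x powr (1 / 2)"
    using assms by (simp add: powr_def)
  also have "\<dots> = sqrt x"
    using assms by (simp add: powr_half_sqrt)
  finally show ?thesis
    using assms by simp
qed

lemma besselI2_ratio_eq:
  assumes "0 < v" "0 < vp" "0 < vm"
  shows "besselI2 vm * besselI2 vp / (besselI2 v)\<^sup>2 = v / sqrt (vp * vm) *
    (exp (log_besselI2_scaled (vp\<^sup>2) + log_besselI2_scaled (vm\<^sup>2) - 2 * log_besselI2_scaled (v\<^sup>2))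
     * exp (vp + vm - 2 * v))"
proof -
  have exp_second_difference: "exp (x + y - 2 * z) = exp x * exp y / (exp z)\<^sup>2" for x y z :: real
    by (simp add: exp_add exp_diff exp_double)
  have "exp (log_besselI2_scaled (vp\<^sup>2) + log_besselI2_scaled (vm\<^sup>2) - 2 * log_besselI2_scaled (v\<^sup>2))
      * exp (vp + vm - 2 * v)
    = exp ((log_besselI2_scaled (vm\<^sup>2) + vm) + (log_besselI2_scaled (vp\<^sup>2) + vp)
        - 2 * (log_besselI2_scaled (v\<^sup>2) + v))"
    by (simp add: exp_add[symmetric] algebra_simps)
  also have "\<dots> = exp (log_besselI2_scaled (vm\<^sup>2) + vm) * exp (log_besselI2_scaled (vp\<^sup>2) + vp)
      / (exp (log_besselI2_scaled (v\<^sup>2) + v))\<^sup>2"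
    by (rule exp_second_difference)
  finally have "exp (log_besselI2_scaled (vp\<^sup>2) + log_besselI2_scaled (vm\<^sup>2) - 2 * log_besselI2_scaled (v\<^sup>2))
      * exp (vp + vm - 2 * v)
    = exp (log_besselI2_scaled (vm\<^sup>2) + vm) * exp (log_besselI2_scaled (vp\<^sup>2) + vp)
      / (exp (log_besselI2_scaled (v\<^sup>2) + v))\<^sup>2" .
  then show ?thesis
    using assms by (simp add: besselI2_eq_exp real_sqrt_mult field_simps power2_eq_square)
qed

lemma step_constant_bounds:
  fixes c :: real
  assumes "14.8 \<le> c" "c \<le> 14.81"
  shows "54 \<le> c\<^sup>2 / 4" "c\<^sup>2 \<le> 220" "308 \<le> 45 / 32 * c\<^sup>2" "45 / 32 * c\<^sup>2 \<le> 309"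
    and "3000 \<le> c ^ 3" "225 / 64 * c ^ 3 \<le> 11500" "c ^ 4 / 2 \<le> 25000"
proof -
  have "14.8 ^ n \<le> c ^ n" "c ^ n \<le> 14.81 ^ n" for n
    using assms by (simp_all add: power_mono)
  from this[of 2] this[of 3] this[of 4]
  show "54 \<le> c\<^sup>2 / 4" "c\<^sup>2 \<le> 220" "308 \<le> 45 / 32 * c\<^sup>2" "45 / 32 * c\<^sup>2 \<le> 309"
    and "3000 \<le> c ^ 3" "225 / 64 * c ^ 3 \<le> 11500" "c ^ 4 / 2 \<le> 25000"
    by (simp_all add: power_divide)
qed

lemma besselI2_ratio_factor_bounds:
  fixes v c :: real
  assumes v: "186 \<le> v" and vm: "186 \<le> sqrt (v\<^sup>2 - c)"
    and c: "14.8 \<le> c" "c \<le> 14.81" "500 * c \<le> v\<^sup>2"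
  defines "Y \<equiv> exp (log_besselI2_scaled (v\<^sup>2 + c) + log_besselI2_scaled (v\<^sup>2 - c) - 2 * log_besselI2_scaled (v\<^sup>2))
    * exp (sqrt (v\<^sup>2 + c) + sqrt (v\<^sup>2 - c) - 2 * v)"
  shows "(1 - c\<^sup>2 / (4 * v ^ 3) - c ^ 3 / v ^ 5 - 5 / 128 * c ^ 4 / v ^ 7) * (1 - 309 / v ^ 5 - 535 / v ^ 6) \<le> Y"
    and "Y \<le> (1 - c\<^sup>2 / (4 * v ^ 3) + (c\<^sup>2 / (4 * v ^ 3))\<^sup>2) * (1 - 308 / v ^ 5 - 286 / v ^ 6)"
proof -
  define t where "t = 1 / v"
  define a where "a = c\<^sup>2 / 4 * t ^ 3"
  note step = step_constant_bounds[OF c(1,2)]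
  have v0: "0 < v" and c0: "0 < c"
    using v c by simp_all
  have t: "0 < t" "t \<le> 1 / 186"
    using v by (simp_all add: t_def field_simps)
  have "t ^ 3 \<le> t" "0 \<le> t ^ 3"
    using t by (simp_all add: power_decreasing[of 1 3, simplified])
  then have a: "54 * t ^ 3 \<le> a" "a \<le> 1 / 2" "0 \<le> a"
    using step(1,2) t mult_mono[of "c\<^sup>2 / 4" 55 "t ^ 3" "1 / 186"]
    by (simp_all add: a_def mult_right_mono)
  note d = sqrt_second_difference_bounds[OF v0, of c]
  note \<Delta>\<Phi> = log_besselI2_scaled_second_difference_le[OF v0 vm c0]
    log_besselI2_scaled_second_difference_ge[OF v0 vm c0 c(2,3)]
  have "(1 - a - c ^ 3 * t ^ 5 - 5 / 128 * c ^ 4 * t ^ 7) * (1 - 309 * t ^ 5 - 535 * t ^ 6) \<le> Y"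
    unfolding Y_def using step c0 a d \<Delta>\<Phi>(2) c
    by (intro exp_mult_exp_ge[OF t a(3,2), where k = "c ^ 4 / 2"])
      (simp_all add: a_def t_def field_simps)
  then show "(1 - c\<^sup>2 / (4 * v ^ 3) - c ^ 3 / v ^ 5 - 5 / 128 * c ^ 4 / v ^ 7)
      * (1 - 309 / v ^ 5 - 535 / v ^ 6) \<le> Y"
    by (simp add: a_def t_def power_one_over)
  have "Y \<le> (1 - a + a\<^sup>2) * (1 - 308 * t ^ 5 - 286 * t ^ 6)"
    unfolding Y_def using step c0 d \<Delta>\<Phi>(1) c
    by (intro exp_mult_exp_le[OF t a(1,2), where \<beta> = "45 / 32 * c\<^sup>2" and \<gamma> = "225 / 64 * c ^ 3"])
      (simp_all add: a_def t_def field_simps)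
  then show "Y \<le> (1 - c\<^sup>2 / (4 * v ^ 3) + (c\<^sup>2 / (4 * v ^ 3))\<^sup>2) * (1 - 308 / v ^ 5 - 286 / v ^ 6)"
    by (simp add: a_def t_def power_one_over)
qed

lemma three_halves_pi_sq_bounds: "14.8 \<le> 3 * pi\<^sup>2 / 2" "3 * pi\<^sup>2 / 2 \<le> 14.81"
proof -
  have "3.1415 \<le> pi" "pi \<le> 3.1416"
    using pi_approx by simp_all
  then have "3.1415\<^sup>2 \<le> pi\<^sup>2" "pi\<^sup>2 \<le> 3.1416\<^sup>2"
    by (simp_all add: power_mono)
  then show "14.8 \<le> 3 * pi\<^sup>2 / 2" "3 * pi\<^sup>2 / 2 \<le> 14.81"
    by (simp_all add: power_divide)
qed

lemma pi_sqrt_arguments: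
  fixes n :: nat
  assumes "2363 \<le> n"
  defines "v \<equiv> pi * sqrt (3 * real n / 2)" and "c \<equiv> 3 * pi\<^sup>2 / 2"
  shows "pi * sqrt (3 * (real n + 1) / 2) = sqrt (v\<^sup>2 + c)"
    and "pi * sqrt (3 * (real n - 1) / 2) = sqrt (v\<^sup>2 - c)"
    and "186 \<le> v" "186 \<le> sqrt (v\<^sup>2 - c)" "500 * c \<le> v\<^sup>2"
proof -
  have c: "14.8 \<le> c" "c \<le> 14.81"
    using three_halves_pi_sq_bounds by (simp_all add: c_def)
  have n: "2363 \<le> real n"
    using assms(1) by simp
  have v2: "v\<^sup>2 = c * real n"
    using n by (simp add: v_def c_def power_mult_distrib)
  show "pi * sqrt (3 * (real n + 1) / 2) = sqrt (v\<^sup>2 + c)"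
    using n by (intro real_sqrt_unique[symmetric]) (simp_all add: v2 c_def power_mult_distrib algebra_simps)
  show "pi * sqrt (3 * (real n - 1) / 2) = sqrt (v\<^sup>2 - c)"
    using n by (intro real_sqrt_unique[symmetric]) (simp_all add: v2 c_def power_mult_distrib field_simps)
  have "14.8 * 2363 \<le> c * real n"
    using c n by (intro mult_mono) simp_all
  moreover have "14.8 * 2362 \<le> c * (real n - 1)"
    using c n by (intro mult_mono) simp_all
  ultimately have "186\<^sup>2 \<le> v\<^sup>2" "186\<^sup>2 \<le> v\<^sup>2 - c" "500 * c \<le> v\<^sup>2"
    using c n by (simp_all add: v2 algebra_simps)
  moreover have "0 \<le> v"
    by (simp add: v_def)
  ultimately show "186 \<le> v" "186 \<le> sqrt (v\<^sup>2 - c)" "500 * c \<le> v\<^sup>2"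
    by (auto intro: power2_le_imp_le real_le_rsqrt)
qed

theorem lemma4p2:
  fixes n :: nat
  assumes "n \<ge> 2363"
  defines "v \<equiv> pi * sqrt (3 * real n / 2)"
      and "vp \<equiv> pi * sqrt (3 * (real n + 1) / 2)"
      and "vm \<equiv> pi * sqrt (3 * (real n - 1) / 2)"
  defines "Xi \<equiv> (1 - 9 * pi ^ 4 / (16 * v ^ 3) - 27 * pi ^ 6 / (8 * v ^ 5)
                   - 405 * pi ^ 8 / (2048 * v ^ 7))
                * (1 - 309 / v ^ 5 - 535 / v ^ 6)"
      and "Psi \<equiv> (1 - 9 * pi ^ 4 / (16 * v ^ 3) + 81 * pi ^ 8 / (256 * v ^ 6))
                * (1 - 308 / v ^ 5 - 286 / v ^ 6)"
  shows "v / sqrt (vp * vm) * Xi \<le> besselI2 vm * besselI2 vp / (besselI2 v) ^ 2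
       \<and> besselI2 vm * besselI2 vp / (besselI2 v) ^ 2 \<le> v / sqrt (vp * vm) * Psi"
proof -
  define c where "c = 3 * pi\<^sup>2 / 2"
  note args = pi_sqrt_arguments[OF assms(1), folded v_def vp_def vm_def c_def]
  have pos: "0 < v" "0 < vp" "0 < vm"
    using assms(1) by (simp_all add: v_def vp_def vm_def)
  define Y where "Y = exp (log_besselI2_scaled (v\<^sup>2 + c) + log_besselI2_scaled (v\<^sup>2 - c)
    - 2 * log_besselI2_scaled (v\<^sup>2)) * exp (sqrt (v\<^sup>2 + c) + sqrt (v\<^sup>2 - c) - 2 * v)"
  have ratio: "besselI2 vm * besselI2 vp / (besselI2 v)\<^sup>2 = v / sqrt (vp * vm) * Y"
    using besselI2_ratio_eq[OF pos] pos by (simp add: Y_def args(1,2))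
  have Xi: "Xi = (1 - c\<^sup>2 / (4 * v ^ 3) - c ^ 3 / v ^ 5 - 5 / 128 * c ^ 4 / v ^ 7)
      * (1 - 309 / v ^ 5 - 535 / v ^ 6)"
    by (simp add: Xi_def c_def power_divide flip: power_mult)
  have Psi: "Psi = (1 - c\<^sup>2 / (4 * v ^ 3) + (c\<^sup>2 / (4 * v ^ 3))\<^sup>2) * (1 - 308 / v ^ 5 - 286 / v ^ 6)"
    by (simp add: Psi_def c_def power_divide flip: power_mult)
  have K: "0 \<le> v / sqrt (vp * vm)"
    using pos by simp
  note Y_bounds = besselI2_ratio_factor_bounds[OF args(3,4) three_halves_pi_sq_bounds[folded c_def]
      args(5), folded Y_def]
  show ?thesis
    unfolding ratio Xi Psi
    using mult_left_mono[OF Y_bounds(1) K] mult_left_mono[OF Y_bounds(2) K] by (rule conjI)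
qed

end
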